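(* For every integer $n\ge 1$, the restriction to $\mathfrak{so}(2n+1)$ of the functional $$F_n=\sum_{i=1}^{n}\sum_{j=1}^{n+1-i}e_{i,j}^*$$ is regular on $B_n=\mathfrak{so}(2n+1)$, i.e. the kernel of its Kirillov form on $\mathfrak{so}(2n+1)$ has dimension $n$.
   Context: Over $\mathbb{C}$. $e_{i,j}^*(X)=X_{i,j}$. Here $\mathfrak{so}(2n+1)$ denotes the Lie algebra of $(2n+1)\times(2n+1)$ matrices $X$ satisfying $X_{i,j}=-X_{2n+2-j,2n+2-i}$ for all $i,j$ (skew-symmetric with respect to the antidiagonal), spanned by $e_{i,j}-e_{2n+2-j,2n+2-i}$. For $f\in\mathfrak{g}^*$, $B_f(x,y)=f([x,y])$, $\ker(B_f)=\{x\in\mathfrak{g}: f([x,y])=0\ \forall y\in\mathfrak{g}\}$, and $f$ is regular if $\dim\ker(B_f)=\operatorname{ind}\mathfrak{g}:=\min_{g\in\mathfrak{g}^*}\dim\ker(B_g)$. It is known that $\operatorname{ind}\mathfrak{so}(2n+1)=n$. *)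

theory Defs
  imports Complex_Main "HOL-Library.Function_Algebras"
begin

text \<open>Matrices of size N x N (indices 1..N) are modelled as functions
  nat => nat => complex that vanish outside {1..N} x {1..N}.\<close>

type_synonym cmat = "nat \<Rightarrow> nat \<Rightarrow> complex"

definition cscale :: "complex \<Rightarrow> cmat \<Rightarrow> cmat" where
  "cscale c X = (\<lambda>i j. c * X i j)"

interpretation cmat_vs: vector_space cscale
  by unfold_locales (auto simp: cscale_def fun_eq_iff algebra_simps)

definition supported :: "nat \<Rightarrow> cmat \<Rightarrow> bool" where
  "supported N X \<longleftrightarrow> (\<forall>i j. X i j \<noteq> 0 \<longrightarrow> i \<in> {1..N} \<and> j \<in> {1..N})"

text \<open>so(2n+1): matrices skew-symmetric with respect to the antidiagonal.\<close>
definition so_odd :: "nat \<Rightarrow> cmat set" where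
  "so_odd n = {X. supported (2*n+1) X \<and>
     (\<forall>i\<in>{1..2*n+1}. \<forall>j\<in>{1..2*n+1}. X i j = - X (2*n+2-j) (2*n+2-i))}"

definition mat_mul :: "nat \<Rightarrow> cmat \<Rightarrow> cmat \<Rightarrow> cmat" where
  "mat_mul N X Y = (\<lambda>i j. if i \<in> {1..N} \<and> j \<in> {1..N}
      then (\<Sum>k=1..N. X i k * Y k j) else 0)"

definition lie_br :: "nat \<Rightarrow> cmat \<Rightarrow> cmat \<Rightarrow> cmat" where
  "lie_br N X Y = mat_mul N X Y - mat_mul N Y X"

definition F_fun :: "nat \<Rightarrow> cmat \<Rightarrow> complex" where
  "F_fun n X = (\<Sum>i=1..n. \<Sum>j=1..n+1-i. X i j)"

definition kirillov_ker :: "cmat set \<Rightarrow> (cmat \<Rightarrow> cmat \<Rightarrow> cmat) \<Rightarrow> (cmat \<Rightarrow> complex) \<Rightarrow> cmat set" where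
  "kirillov_ker g br f = {x \<in> g. \<forall>y\<in>g. f (br x y) = 0}"

end

theory Submission
  imports Defs
begin

text \<open>
  On so(2n+1) the functional F_n is half the trace pairing with a symmetric matrix P in so(2n+1),
  and this pairing is nondegenerate on so(2n+1); so the kernel of the Kirillov form is the
  centralizer of P in so(2n+1). P vanishes on the middle row and column and is invertible on their
  complement, with a block diagonal inverse Q whose upper-left block B is the inverse of the
  antitriangular upper-left block of P. Commuting with Q forces the off-diagonal blocks of a kernel
  element to anticommute with B, hence to commute with the tridiagonal matrix B^2 while being skew,
  which makes them vanish. So the kernel is {diag(a, 0, -a') | a B = B a}. A matrix commuting with
  B^2 is determined by its first column, and for each k < n there is an explicit matrix with first
  column e_(k+1) commuting with B; hence that centralizer, and the kernel, has dimension n.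
\<close>

declare sum.cl_ivl_Suc [simp del] \<comment> \<open>it would split the last term off every sum over {1..2*n+1}\<close>

lemma cmat_sum_apply: "(sum f A) i j = (\<Sum>a\<in>A. f a i j)"
  by (induction A rule: infinite_finite_induct) auto

lemma cscale_apply [simp]: "cscale c X i j = c * X i j"
  by (simp add: cscale_def)

lemma sum_if_eq_mult:
  "finite A \<Longrightarrow> (\<Sum>k\<in>A. (if P \<and> k = c then 1 else 0) * f k) = (if P \<and> c \<in> A then f c else (0::complex))"
  by (cases P) (simp_all add: if_distrib[where f="\<lambda>x. x * f _"] cong: if_cong)

lemma mat_mul_inside: "i \<in> {1..m} \<Longrightarrow> j \<in> {1..m} \<Longrightarrow> mat_mul m X Y i j = (\<Sum>k=1..m. X i k * Y k j)"
  by (simp add: mat_mul_def)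

lemma mat_mul_outside: "\<not> (i \<in> {1..m} \<and> j \<in> {1..m}) \<Longrightarrow> mat_mul m X Y i j = 0"
  by (auto simp: mat_mul_def)

lemma mat_mul_transpose: "mat_mul m X Y i j = mat_mul m (\<lambda>a b. Y b a) (\<lambda>a b. X b a) j i"
  by (auto simp: mat_mul_def mult.commute)

lemma mat_mul_symmetric_right:
  assumes "\<And>a b. S a b = S b a"
  shows "mat_mul m Y S i j = mat_mul m S (\<lambda>a b. Y b a) j i"
proof -
  have "(\<lambda>a b. S b a) = S"
    using assms by (intro ext) simp
  then show ?thesis
    by (subst mat_mul_transpose) simp
qed

lemma mat_mul_assoc: "mat_mul m (mat_mul m X Y) Z = mat_mul m X (mat_mul m Y Z)"
proof (intro ext)
  fix i j
  show "mat_mul m (mat_mul m X Y) Z i j = mat_mul m X (mat_mul m Y Z) i j"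
  proof (cases "i \<in> {1..m} \<and> j \<in> {1..m}")
    case True
    have "mat_mul m (mat_mul m X Y) Z i j = (\<Sum>l=1..m. \<Sum>k=1..m. X i k * Y k l * Z l j)"
      using True by (simp add: mat_mul_def sum_distrib_right)
    also have "\<dots> = (\<Sum>k=1..m. \<Sum>l=1..m. X i k * Y k l * Z l j)"
      by (rule sum.swap)
    also have "\<dots> = mat_mul m X (mat_mul m Y Z) i j"
      using True by (simp add: mat_mul_def sum_distrib_left mult.assoc)
    finally show ?thesis .
  qed (simp add: mat_mul_outside)
qed

lemma mat_mul_minus_left: "mat_mul m (- X) Y = - mat_mul m X Y"
  and mat_mul_minus_right: "mat_mul m X (- Y) = - mat_mul m X Y"
  and mat_mul_diff_left: "mat_mul m (X - Y) Z = mat_mul m X Z - mat_mul m Y Z"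
  and mat_mul_diff_right: "mat_mul m Z (X - Y) = mat_mul m Z X - mat_mul m Z Y"
  and mat_mul_cscale_left: "mat_mul m (cscale c X) Y = cscale c (mat_mul m X Y)"
  and mat_mul_cscale_right: "mat_mul m X (cscale c Y) = cscale c (mat_mul m X Y)"
  by (auto simp: mat_mul_def fun_eq_iff sum_negf sum_subtractf sum_distrib_left algebra_simps)

lemma mat_mul_sum_left: "finite A \<Longrightarrow> mat_mul m (\<Sum>a\<in>A. f a) Y = (\<Sum>a\<in>A. mat_mul m (f a) Y)"
  and mat_mul_sum_right: "finite A \<Longrightarrow> mat_mul m Y (\<Sum>a\<in>A. f a) = (\<Sum>a\<in>A. mat_mul m Y (f a))"
  by (auto simp: fun_eq_iff cmat_sum_apply mat_mul_def sum_distrib_left sum_distrib_right intro: sum.swap)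

lemma commute_square:
  assumes "mat_mul m B c = mat_mul m c B \<or> mat_mul m B c = - mat_mul m c B"
  shows "mat_mul m (mat_mul m B B) c = mat_mul m c (mat_mul m B B)"
  using assms by (metis mat_mul_assoc mat_mul_minus_left mat_mul_minus_right minus_minus)

lemma commute_inverse:
  assumes "mat_mul m P Q = E" "mat_mul m Q P = E" "mat_mul m E x = x" "mat_mul m x E = x"
    and "mat_mul m P x = mat_mul m x P"
  shows "mat_mul m Q x = mat_mul m x Q"
  by (metis assms mat_mul_assoc)

lemma so_odd_entry:
  "x \<in> so_odd n \<Longrightarrow> a \<in> {1..2*n+1} \<Longrightarrow> b \<in> {1..2*n+1} \<Longrightarrow> x a b = - x (2*n+2-b) (2*n+2-a)"
  unfolding so_odd_def by blast

lemma so_odd_outside: "x \<in> so_odd n \<Longrightarrow> \<not> (i \<in> {1..2*n+1} \<and> j \<in> {1..2*n+1}) \<Longrightarrow> x i j = 0"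
  unfolding so_odd_def supported_def by blast

lemma so_odd_elementary:
  assumes a: "a \<in> {1..2*n+1}" and b: "b \<in> {1..2*n+1}"
  shows "(\<lambda>i j. (if i = a \<and> j = b then 1 else 0) - (if i = 2*n+2-b \<and> j = 2*n+2-a then 1 else 0)) \<in> so_odd n"
    (is "?y \<in> _")
proof -
  have e1: "(2*n+2-j = a \<and> 2*n+2-i = b) = (i = 2*n+2-b \<and> j = 2*n+2-a)"
    and e2: "(2*n+2-j = 2*n+2-b \<and> 2*n+2-i = 2*n+2-a) = (i = a \<and> j = b)"
    if "i \<in> {1..2*n+1}" "j \<in> {1..2*n+1}" for i j
    using that a b by auto
  have "supported (2*n+1) ?y"
  proof -
    have "(i = a \<and> j = b) \<or> (i = 2*n+2-b \<and> j = 2*n+2-a)" if "?y i j \<noteq> 0" for i j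
      using that by (cases "i = a \<and> j = b") auto
    moreover have "2*n+2-b \<in> {1..2*n+1}" "2*n+2-a \<in> {1..2*n+1}"
      using a b by auto
    ultimately show ?thesis
      using a b unfolding supported_def by blast
  qed
  moreover have "?y i j = - ?y (2*n+2-j) (2*n+2-i)" if "i \<in> {1..2*n+1}" "j \<in> {1..2*n+1}" for i j
    by (simp only: e1[OF that] e2[OF that]) simp
  ultimately show ?thesis
    unfolding so_odd_def by blast
qed

lemma sum_mirror: "(\<Sum>k=1..2*(n::nat)+1. f k) = (\<Sum>k=1..2*n+1. f (2*n+2-k))"
  by (subst sum.atLeastAtMost_rev) simp

lemma mat_mul_so_odd_mirror:
  assumes x: "x \<in> so_odd n" and y: "y \<in> so_odd n" and i: "i \<in> {1..2*n+1}" and j: "j \<in> {1..2*n+1}"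
  shows "mat_mul (2*n+1) y x (2*n+2-j) (2*n+2-i) = mat_mul (2*n+1) x y i j"
proof -
  have "mat_mul (2*n+1) y x (2*n+2-j) (2*n+2-i) = (\<Sum>k=1..2*n+1. y (2*n+2-j) k * x k (2*n+2-i))"
    using i j by (auto simp: mat_mul_def)
  also have "\<dots> = (\<Sum>k=1..2*n+1. y (2*n+2-k) j * x i (2*n+2-k))"
  proof (rule sum.cong[OF refl])
    fix k assume k: "k \<in> {1..2*n+1}"
    have "2*n+2-j \<in> {1..2*n+1}" "2*n+2-i \<in> {1..2*n+1}" "2*n+2-(2*n+2-j) = j" "2*n+2-(2*n+2-i) = i"
      using i j by auto
    then have "y (2*n+2-j) k = - y (2*n+2-k) j" "x k (2*n+2-i) = - x i (2*n+2-k)"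
      using so_odd_entry[OF y _ k] so_odd_entry[OF x k] by metis+
    then show "y (2*n+2-j) k * x k (2*n+2-i) = y (2*n+2-k) j * x i (2*n+2-k)" by simp
  qed
  also have "\<dots> = (\<Sum>k=1..2*n+1. y k j * x i k)"
    by (subst sum_mirror) (auto intro: sum.cong)
  also have "\<dots> = mat_mul (2*n+1) x y i j"
    using i j by (auto simp: mat_mul_def mult.commute)
  finally show ?thesis .
qed

lemma lie_br_so_odd_skew:
  assumes "x \<in> so_odd n" "y \<in> so_odd n" "i \<in> {1..2*n+1}" "j \<in> {1..2*n+1}"
  shows "lie_br (2*n+1) x y i j = - lie_br (2*n+1) x y (2*n+2-j) (2*n+2-i)"
  using mat_mul_so_odd_mirror[OF assms] mat_mul_so_odd_mirror[OF assms(2,1,3,4)]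
  by (simp add: lie_br_def)

text \<open>The matrix P: for Z \<in> so(2n+1) the entries with i + j \<ge> 3n + 3 mirror those with
  i + j \<le> n + 1, so the trace pairing of Z with Fmat is 2 F_n(Z).\<close>
definition Fmat :: "nat \<Rightarrow> cmat" where
  "Fmat n i j = (if i \<in> {1..2*n+1} \<and> j \<in> {1..2*n+1} then
     (if i+j \<le> n+1 then 1 else 0) - (if 3*n+3 \<le> i+j then 1 else 0) else 0)"

lemma Fmat_sym: "Fmat n i j = Fmat n j i"
  by (auto simp: Fmat_def add.commute)

lemma Fmat_so_odd: "Fmat n \<in> so_odd n"
  unfolding so_odd_def supported_def by (auto simp: Fmat_def)

lemma F_fun_eq_corner_sum:
  "F_fun n Z = (\<Sum>i=1..2*n+1. \<Sum>j=1..2*n+1. if i+j \<le> n+1 then Z i j else 0)"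
proof -
  have row: "(\<Sum>j=1..2*n+1. if i+j \<le> n+1 then Z i j else 0) =
     (if i \<le> n then (\<Sum>j=1..n+1-i. Z i j) else 0)" if "i \<in> {1..2*n+1}" for i
  proof (cases "i \<le> n")
    case True
    have "(\<Sum>j=1..2*n+1. if i+j \<le> n+1 then Z i j else 0) = (\<Sum>j\<in>{j\<in>{1..2*n+1}. i+j \<le> n+1}. Z i j)"
      by (rule sum.inter_filter[symmetric]) simp
    also have "{j\<in>{1..2*n+1}. i+j \<le> n+1} = {1..n+1-i}"
      using True by auto
    finally show ?thesis
      using True by simp
  qed (auto intro!: sum.neutral)
  have "(\<Sum>i=1..2*n+1. \<Sum>j=1..2*n+1. if i+j \<le> n+1 then Z i j else 0)
      = (\<Sum>i=1..2*n+1. if i \<le> n then (\<Sum>j=1..n+1-i. Z i j) else 0)"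
    using row by (rule sum.cong[OF refl])
  also have "\<dots> = (\<Sum>i\<in>{i\<in>{1..2*n+1}. i \<le> n}. \<Sum>j=1..n+1-i. Z i j)"
    by (rule sum.inter_filter[symmetric]) simp
  also have "{i\<in>{1..2*n+1}. i \<le> n} = {1..n}"
    by auto
  finally show ?thesis
    by (simp add: F_fun_def)
qed

lemma lower_corner_sum_skew:
  fixes Z :: cmat
  assumes Z: "\<And>i j. i \<in> {1..2*n+1} \<Longrightarrow> j \<in> {1..2*n+1} \<Longrightarrow> Z i j = - Z (2*n+2-j) (2*n+2-i)"
  shows "(\<Sum>i=1..2*n+1. \<Sum>j=1..2*n+1. if 3*n+3 \<le> i+j then Z i j else 0)
        = - (\<Sum>i=1..2*n+1. \<Sum>j=1..2*n+1. if i+j \<le> n+1 then Z i j else 0)"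
proof -
  have "(\<Sum>i=1..2*n+1. \<Sum>j=1..2*n+1. if 3*n+3 \<le> i+j then Z i j else 0)
      = (\<Sum>i=1..2*n+1. \<Sum>j=1..2*n+1. if 3*n+3 \<le> (2*n+2-i)+(2*n+2-j) then Z (2*n+2-i) (2*n+2-j) else 0)"
    by (subst sum_mirror) (rule sum.cong[OF refl], subst sum_mirror, simp)
  also have "\<dots> = (\<Sum>i=1..2*n+1. \<Sum>j=1..2*n+1. if i+j \<le> n+1 then - Z j i else 0)"
  proof (intro sum.cong refl)
    fix i j assume i: "i \<in> {1..2*n+1}" and j: "j \<in> {1..2*n+1}"
    have "2*n+2-i \<in> {1..2*n+1}" "2*n+2-j \<in> {1..2*n+1}" "2*n+2-(2*n+2-i) = i" "2*n+2-(2*n+2-j) = j"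
      using i j by auto
    then have "Z (2*n+2-i) (2*n+2-j) = - Z j i"
      using Z by metis
    then show "(if 3*n+3 \<le> (2*n+2-i)+(2*n+2-j) then Z (2*n+2-i) (2*n+2-j) else 0) =
        (if i+j \<le> n+1 then - Z j i else 0)"
      using i j by auto
  qed
  also have "\<dots> = (\<Sum>j=1..2*n+1. \<Sum>i=1..2*n+1. if i+j \<le> n+1 then - Z j i else 0)"
    by (rule sum.swap)
  also have "\<dots> = - (\<Sum>i=1..2*n+1. \<Sum>j=1..2*n+1. if i+j \<le> n+1 then Z i j else 0)"
    by (simp add: sum_negf[symmetric] add.commute if_distrib[where f=uminus] cong: if_cong)
  finally show ?thesis .
qed

lemma F_fun_lie_br:
  assumes "x \<in> so_odd n" "y \<in> so_odd n"
  shows "2 * F_fun n (lie_br (2*n+1) x y) =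
    (\<Sum>i=1..2*n+1. \<Sum>j=1..2*n+1. Fmat n i j * lie_br (2*n+1) x y i j)"
proof -
  let ?Z = "lie_br (2*n+1) x y"
  have "(\<Sum>i=1..2*n+1. \<Sum>j=1..2*n+1. Fmat n i j * ?Z i j) =
     (\<Sum>i=1..2*n+1. \<Sum>j=1..2*n+1. (if i+j \<le> n+1 then ?Z i j else 0) - (if 3*n+3 \<le> i+j then ?Z i j else 0))"
    by (intro sum.cong refl) (auto simp: Fmat_def algebra_simps)
  also have "\<dots> = 2 * F_fun n ?Z"
    using lower_corner_sum_skew[of n ?Z, OF lie_br_so_odd_skew[OF assms]]
    by (simp only: sum_subtractf F_fun_eq_corner_sum diff_minus_eq_add mult_2)
  finally show ?thesis ..
qed

lemma trace_pairing_lie_br: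
  assumes P: "\<And>i j. P i j = P j i"
  shows "(\<Sum>i=1..m. \<Sum>j=1..m. P i j * lie_br m x y i j) =
    (\<Sum>a=1..m. \<Sum>b=1..m. lie_br m P x b a * y a b)"
proof -
  have xy: "(\<Sum>i=1..m. \<Sum>j=1..m. P i j * mat_mul m x y i j) = (\<Sum>a=1..m. \<Sum>b=1..m. mat_mul m P x b a * y a b)"
  proof -
    have "(\<Sum>i=1..m. \<Sum>j=1..m. P i j * mat_mul m x y i j) = (\<Sum>i=1..m. \<Sum>j=1..m. \<Sum>k=1..m. P i j * x i k * y k j)"
      by (intro sum.cong refl) (auto simp: mat_mul_def sum_distrib_left mult.assoc)
    also have "\<dots> = (\<Sum>j=1..m. \<Sum>k=1..m. \<Sum>i=1..m. P i j * x i k * y k j)"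
      by (subst sum.swap) (intro sum.cong refl sum.swap)
    also have "\<dots> = (\<Sum>k=1..m. \<Sum>j=1..m. \<Sum>i=1..m. P i j * x i k * y k j)"
      by (rule sum.swap)
    also have "\<dots> = (\<Sum>a=1..m. \<Sum>b=1..m. mat_mul m P x b a * y a b)"
      by (intro sum.cong refl) (auto simp: mat_mul_def sum_distrib_right P)
    finally show ?thesis .
  qed
  have yx: "(\<Sum>i=1..m. \<Sum>j=1..m. P i j * mat_mul m y x i j) = (\<Sum>a=1..m. \<Sum>b=1..m. mat_mul m x P b a * y a b)"
  proof -
    have "(\<Sum>i=1..m. \<Sum>j=1..m. P i j * mat_mul m y x i j) = (\<Sum>i=1..m. \<Sum>j=1..m. \<Sum>k=1..m. P i j * y i k * x k j)"
      by (intro sum.cong refl) (auto simp: mat_mul_def sum_distrib_left mult.assoc)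
    also have "\<dots> = (\<Sum>i=1..m. \<Sum>k=1..m. \<Sum>j=1..m. P i j * y i k * x k j)"
      by (intro sum.cong refl sum.swap)
    also have "\<dots> = (\<Sum>a=1..m. \<Sum>b=1..m. mat_mul m x P b a * y a b)"
      by (intro sum.cong refl) (auto simp: mat_mul_def sum_distrib_left sum_distrib_right P ac_simps)
    finally show ?thesis .
  qed
  have "(\<Sum>i=1..m. \<Sum>j=1..m. P i j * lie_br m x y i j) =
     (\<Sum>i=1..m. \<Sum>j=1..m. P i j * mat_mul m x y i j) - (\<Sum>i=1..m. \<Sum>j=1..m. P i j * mat_mul m y x i j)"
    by (simp add: lie_br_def right_diff_distrib sum_subtractf)
  also have "\<dots> = (\<Sum>a=1..m. \<Sum>b=1..m. lie_br m P x b a * y a b)"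
    unfolding xy yx by (simp add: lie_br_def left_diff_distrib sum_subtractf)
  finally show ?thesis .
qed

lemma sum_sum_delta:
  fixes f :: "nat \<Rightarrow> nat \<Rightarrow> complex"
  assumes "a \<in> {1..m}" "b \<in> {1..m}"
  shows "(\<Sum>a'=1..m. \<Sum>b'=1..m. f a' b' * (if a' = a \<and> b' = b then 1 else 0)) = f a b"
proof -
  have "f a' b' * (if a' = a \<and> b' = b then 1 else 0) = (if a' = a then (if b' = b then f a' b' else 0) else 0)"
    for a' b'
    by simp
  moreover have "(\<Sum>b'=1..m. if a' = a then (if b' = b then f a' b' else 0) else 0) = (if a' = a then f a' b else 0)"
    for a'
    using assms by (simp add: sum.delta)
  ultimately show ?thesis
    using assms by (simp add: sum.delta)
qed

lemma so_odd_pairing_nondegenerate: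
  assumes D: "\<And>i j. i \<in> {1..2*n+1} \<Longrightarrow> j \<in> {1..2*n+1} \<Longrightarrow> D i j = - D (2*n+2-j) (2*n+2-i)"
    and zero: "\<And>y. y \<in> so_odd n \<Longrightarrow> (\<Sum>a=1..2*n+1. \<Sum>b=1..2*n+1. D b a * y a b) = 0"
    and a: "a \<in> {1..2*n+1}" and b: "b \<in> {1..2*n+1}"
  shows "D b a = 0"
proof -
  have a': "2*n+2-a \<in> {1..2*n+1}" and b': "2*n+2-b \<in> {1..2*n+1}"
    using a b by auto
  have "0 = (\<Sum>a'=1..2*n+1. \<Sum>b'=1..2*n+1. D b' a' *
      ((if a' = a \<and> b' = b then 1 else 0) - (if a' = 2*n+2-b \<and> b' = 2*n+2-a then 1 else 0)))"
    using zero[OF so_odd_elementary[OF a b]] by simp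
  also have "\<dots> = D b a - D (2*n+2-a) (2*n+2-b)"
    by (simp only: right_diff_distrib sum_subtractf sum_sum_delta[OF a b] sum_sum_delta[OF b' a'])
  also have "D (2*n+2-a) (2*n+2-b) = - D b a"
    using D[OF b a] by simp
  finally show ?thesis
    by simp
qed

lemma kirillov_ker_iff_commute:
  "x \<in> kirillov_ker (so_odd n) (lie_br (2*n+1)) (F_fun n) \<longleftrightarrow>
   x \<in> so_odd n \<and> mat_mul (2*n+1) (Fmat n) x = mat_mul (2*n+1) x (Fmat n)"
proof (cases "x \<in> so_odd n")
  case x: True
  let ?D = "lie_br (2*n+1) (Fmat n) x"
  have pairing: "2 * F_fun n (lie_br (2*n+1) x y) = (\<Sum>a=1..2*n+1. \<Sum>b=1..2*n+1. ?D b a * y a b)"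
    if "y \<in> so_odd n" for y
    unfolding F_fun_lie_br[OF x that] trace_pairing_lie_br[OF Fmat_sym] ..
  have "(\<forall>y\<in>so_odd n. F_fun n (lie_br (2*n+1) x y) = 0) \<longleftrightarrow> ?D = 0"
  proof
    assume "\<forall>y\<in>so_odd n. F_fun n (lie_br (2*n+1) x y) = 0"
    then have inside: "?D b a = 0" if "a \<in> {1..2*n+1}" "b \<in> {1..2*n+1}" for a b
      using so_odd_pairing_nondegenerate[of n ?D, OF lie_br_so_odd_skew[OF Fmat_so_odd x] _ that] pairing
      by simp
    show "?D = 0"
    proof (intro ext)
      fix b a
      show "?D b a = 0 b a"
        using inside[of a b] by (cases "b \<in> {1..2*n+1} \<and> a \<in> {1..2*n+1}") (auto simp: lie_br_def mat_mul_outside)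
    qed
  next
    assume D: "?D = 0"
    show "\<forall>y\<in>so_odd n. F_fun n (lie_br (2*n+1) x y) = 0"
    proof
      fix y assume y: "y \<in> so_odd n"
      have "2 * F_fun n (lie_br (2*n+1) x y) = 0"
        unfolding pairing[OF y] D by simp
      then show "F_fun n (lie_br (2*n+1) x y) = 0"
        by simp
    qed
  qed
  then show ?thesis
    using x by (simp add: kirillov_ker_def lie_br_def)
qed (simp add: kirillov_ker_def)

text \<open>The inverse of Fmat on the complement of the middle index n + 1.\<close>
definition Fmat_inv :: "nat \<Rightarrow> cmat" where
  "Fmat_inv n i j = (if i\<in>{1..2*n+1} \<and> j\<in>{1..2*n+1} then
    (if i \<le> n \<and> j = n+1-i then 1 else 0) - (if 2 \<le> i \<and> i \<le> n \<and> j = n+2-i then 1 else 0)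
  - (if n+2 \<le> i \<and> j = 3*n+3-i then 1 else 0) + (if n+2 \<le> i \<and> i \<le> 2*n \<and> j = 3*n+2-i then 1 else 0) else 0)"

definition id_off_mid :: "nat \<Rightarrow> cmat" where
  "id_off_mid n i j = (if i\<in>{1..2*n+1} \<and> i \<noteq> n+1 \<and> j = i then 1 else 0)"

lemma Fmat_inv_inside:
  assumes "i \<in> {1..2*n+1}" "j \<in> {1..2*n+1}"
  shows "Fmat_inv n i j =
      (if i \<le> n \<and> j = n+1-i then 1 else 0) - (if (2 \<le> i \<and> i \<le> n) \<and> j = n+2-i then 1 else 0)
    - (if n+2 \<le> i \<and> j = 3*n+3-i then 1 else 0) + (if (n+2 \<le> i \<and> i \<le> 2*n) \<and> j = 3*n+2-i then 1 else 0)"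
  using assms unfolding Fmat_inv_def conj_assoc by (simp only: if_True simp_thms)

lemma if_conj_mem: "(b \<Longrightarrow> c \<in> A) \<Longrightarrow> (if b \<and> c \<in> A then f else 0) = (if b then f else 0)"
  by auto

lemma Fmat_inv_sym: "Fmat_inv n i j = Fmat_inv n j i"
proof (cases "i\<in>{1..2*n+1} \<and> j\<in>{1..2*n+1}")
  case True
  then have i: "i\<in>{1..2*n+1}" and j: "j\<in>{1..2*n+1}" by auto
  have e1: "(i \<le> n \<and> j = n+1-i) = (j \<le> n \<and> i = n+1-j)" using i j by (simp, arith)
  have e2: "((2 \<le> i \<and> i \<le> n) \<and> j = n+2-i) = ((2 \<le> j \<and> j \<le> n) \<and> i = n+2-j)" using i j by (simp, arith)
  have e3: "(n+2 \<le> i \<and> j = 3*n+3-i) = (n+2 \<le> j \<and> i = 3*n+3-j)" using i j by (simp, arith)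
  have e4: "((n+2 \<le> i \<and> i \<le> 2*n) \<and> j = 3*n+2-i) = ((n+2 \<le> j \<and> j \<le> 2*n) \<and> i = 3*n+2-j)" using i j by (simp, arith)
  show ?thesis unfolding Fmat_inv_inside[OF i j] Fmat_inv_inside[OF j i] by (simp only: e1 e2 e3 e4)
next
  case False
  then have "\<not> (j\<in>{1..2*n+1} \<and> i\<in>{1..2*n+1})" by blast
  with False show ?thesis unfolding Fmat_inv_def by (simp only: if_not_P if_False)
qed

lemma mat_mul_Fmat_inv_left: "mat_mul (2*n+1) (Fmat_inv n) Y i j = (if i\<in>{1..2*n+1} \<and> j\<in>{1..2*n+1} then
   (if i \<le> n then Y (n+1-i) j else 0) - (if 2 \<le> i \<and> i \<le> n then Y (n+2-i) j else 0)
 - (if n+2 \<le> i then Y (3*n+3-i) j else 0) + (if n+2 \<le> i \<and> i \<le> 2*n then Y (3*n+2-i) j else 0) else 0)"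
proof (cases "i\<in>{1..2*n+1} \<and> j\<in>{1..2*n+1}")
  case True
  let ?R = "{1..2*n+1}"
  have "mat_mul (2*n+1) (Fmat_inv n) Y i j = (\<Sum>k\<in>?R. (if i \<le> n \<and> k = n+1-i then 1 else 0) * Y k j
     - (if (2 \<le> i \<and> i \<le> n) \<and> k = n+2-i then 1 else 0) * Y k j
     - (if n+2 \<le> i \<and> k = 3*n+3-i then 1 else 0) * Y k j
     + (if (n+2 \<le> i \<and> i \<le> 2*n) \<and> k = 3*n+2-i then 1 else 0) * Y k j)"
    unfolding mat_mul_inside[OF conjunct1[OF True] conjunct2[OF True]]
    by (intro sum.cong refl) (simp only: Fmat_inv_inside[OF conjunct1[OF True]] left_diff_distrib distrib_right)
  also have "\<dots> = (\<Sum>k\<in>?R. (if i \<le> n \<and> k = n+1-i then 1 else 0) * Y k j)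
     - (\<Sum>k\<in>?R. (if (2 \<le> i \<and> i \<le> n) \<and> k = n+2-i then 1 else 0) * Y k j)
     - (\<Sum>k\<in>?R. (if n+2 \<le> i \<and> k = 3*n+3-i then 1 else 0) * Y k j)
     + (\<Sum>k\<in>?R. (if (n+2 \<le> i \<and> i \<le> 2*n) \<and> k = 3*n+2-i then 1 else 0) * Y k j)"
    by (simp only: sum.distrib sum_subtractf)
  also have "\<dots> = (if i \<le> n then Y (n+1-i) j else 0) - (if 2 \<le> i \<and> i \<le> n then Y (n+2-i) j else 0)
 - (if n+2 \<le> i then Y (3*n+3-i) j else 0) + (if n+2 \<le> i \<and> i \<le> 2*n then Y (3*n+2-i) j else 0)"
  proof -
    have c1: "i \<le> n \<Longrightarrow> n+1-i \<in> ?R" and c2: "2 \<le> i \<and> i \<le> n \<Longrightarrow> n+2-i \<in> ?R"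
     and c3: "n+2 \<le> i \<Longrightarrow> 3*n+3-i \<in> ?R" and c4: "n+2 \<le> i \<and> i \<le> 2*n \<Longrightarrow> 3*n+2-i \<in> ?R"
      using True by auto
    show ?thesis unfolding sum_if_eq_mult[OF finite_atLeastAtMost]
      by (simp only: if_conj_mem[OF c1] if_conj_mem[OF c2] if_conj_mem[OF c3] if_conj_mem[OF c4])
  qed
  finally show ?thesis using True by (simp only: if_True simp_thms)
qed (auto simp: mat_mul_def)

lemma mat_mul_Fmat_inv_right:
  "mat_mul (2*n+1) Y (Fmat_inv n) i j = (if i \<in> {1..2*n+1} \<and> j \<in> {1..2*n+1} then
      (if j \<le> n then Y i (n+1-j) else 0) - (if 2 \<le> j \<and> j \<le> n then Y i (n+2-j) else 0)
    - (if n+2 \<le> j then Y i (3*n+3-j) else 0) + (if n+2 \<le> j \<and> j \<le> 2*n then Y i (3*n+2-j) else 0)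
    else 0)"
  by (simp only: mat_mul_symmetric_right[OF Fmat_inv_sym] mat_mul_Fmat_inv_left conj_commute)

lemma mat_mul_id_off_mid_left: "mat_mul (2*n+1) (id_off_mid n) Y i j = (if i\<in>{1..2*n+1} \<and> j\<in>{1..2*n+1} \<and> i \<noteq> n+1 then Y i j else 0)"
proof (cases "i\<in>{1..2*n+1} \<and> j\<in>{1..2*n+1}")
  case True
  have "mat_mul (2*n+1) (id_off_mid n) Y i j = (\<Sum>k\<in>{1..2*n+1}. (if (i \<noteq> n+1) \<and> k = i then 1 else 0) * Y k j)"
    unfolding mat_mul_inside[OF conjunct1[OF True] conjunct2[OF True]] using True
    by (intro sum.cong refl) (simp add: id_off_mid_def)
  also have "\<dots> = (if i \<noteq> n+1 then Y i j else 0)"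
    unfolding sum_if_eq_mult[OF finite_atLeastAtMost] using True by simp
  finally show ?thesis using True by simp
qed (auto simp: mat_mul_outside)

lemma id_off_mid_sym: "id_off_mid n i j = id_off_mid n j i"
  by (auto simp: id_off_mid_def)

lemma mat_mul_id_off_mid_right:
  "mat_mul (2*n+1) Y (id_off_mid n) i j = (if i \<in> {1..2*n+1} \<and> j \<in> {1..2*n+1} \<and> j \<noteq> n+1 then Y i j else 0)"
  by (simp only: mat_mul_symmetric_right[OF id_off_mid_sym] mat_mul_id_off_mid_left) auto

lemma Fmat_upper_rows:
  assumes "1 \<le> i" "i \<le> n" "j \<in> {1..2*n+1}"
  shows "Fmat n (n+1-i) j = (if j \<le> i then 1 else 0)"
    and "2 \<le> i \<Longrightarrow> Fmat n (n+2-i) j = (if j < i then 1 else 0)"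
  using assms by (auto simp: Fmat_def)

lemma Fmat_lower_rows:
  assumes "n+2 \<le> i" "i \<le> 2*n+1" "j \<in> {1..2*n+1}"
  shows "Fmat n (3*n+3-i) j = - (if i \<le> j then 1 else 0)"
    and "i \<le> 2*n \<Longrightarrow> Fmat n (3*n+2-i) j = - (if i < j then 1 else 0)"
  using assms by (auto simp: Fmat_def)

lemma Fmat_inv_Fmat: "mat_mul (2*n+1) (Fmat_inv n) (Fmat n) = id_off_mid n"
proof (intro ext)
  fix i j
  show "mat_mul (2*n+1) (Fmat_inv n) (Fmat n) i j = id_off_mid n i j"
  proof (cases "i \<in> {1..2*n+1} \<and> j \<in> {1..2*n+1}")
    case True
    then consider "1 \<le> i" "i \<le> n" | "i = n+1" | "n+2 \<le> i" "i \<le> 2*n+1"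
      by fastforce
    then show ?thesis
      unfolding mat_mul_Fmat_inv_left using True Fmat_upper_rows[of i n j] Fmat_lower_rows[of n i j]
      by cases (auto simp: id_off_mid_def)
  qed (auto simp: mat_mul_outside id_off_mid_def)
qed

lemma Fmat_Fmat_inv: "mat_mul (2*n+1) (Fmat n) (Fmat_inv n) = id_off_mid n"
proof (intro ext)
  fix i j
  have "mat_mul (2*n+1) (Fmat n) (Fmat_inv n) i j = mat_mul (2*n+1) (Fmat_inv n) (Fmat n) j i"
    by (subst mat_mul_transpose) (simp add: Fmat_sym Fmat_inv_sym)
  then show "mat_mul (2*n+1) (Fmat n) (Fmat_inv n) i j = id_off_mid n i j"
    by (simp only: Fmat_inv_Fmat id_off_mid_sym)
qed

lemma commute_Fmat_mid_zero:
  assumes x: "x \<in> so_odd n" and C: "mat_mul (2*n+1) (Fmat n) x = mat_mul (2*n+1) x (Fmat n)"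
  shows "x i (n+1) = 0" "x (n+1) i = 0"
proof -
  have EX: "mat_mul (2*n+1) (id_off_mid n) x = mat_mul (2*n+1) (mat_mul (2*n+1) (Fmat_inv n) x) (Fmat n)"
    by (metis Fmat_inv_Fmat C mat_mul_assoc)
  have col: "x i (n+1) = 0" for i
  proof (cases "i \<in> {1..2*n+1} \<and> i \<noteq> n+1")
    case True
    have "x i (n+1) = mat_mul (2*n+1) (id_off_mid n) x i (n+1)"
      unfolding mat_mul_id_off_mid_left using True by auto
    also have "\<dots> = mat_mul (2*n+1) (mat_mul (2*n+1) (Fmat_inv n) x) (Fmat n) i (n+1)"
      unfolding EX ..
    also have "\<dots> = 0"
      unfolding mat_mul_def by (simp add: Fmat_def)
    finally show ?thesis .
  next
    case False
    moreover have "x (n+1) (n+1) = - x (n+1) (n+1)"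
      using so_odd_entry[OF x, of "n+1" "n+1"] by simp
    ultimately show ?thesis
      using so_odd_outside[OF x] by fastforce
  qed
  show "x i (n+1) = 0"
    by (rule col)
  show "x (n+1) i = 0"
  proof (cases "i \<in> {1..2*n+1}")
    case True
    then show ?thesis
      using so_odd_entry[OF x, of "n+1" i] col[of "2*n+2-i"] by simp
  qed (simp add: so_odd_outside[OF x])
qed

lemma id_off_mid_neutral:
  assumes x: "x \<in> so_odd n" and c: "\<And>i. x i (n+1) = 0" and r: "\<And>i. x (n+1) i = 0"
  shows "mat_mul (2*n+1) (id_off_mid n) x = x" "mat_mul (2*n+1) x (id_off_mid n) = x"
proof -
  note zero = c r c[folded Suc_eq_plus1] r[folded Suc_eq_plus1] so_odd_outside[OF x]
  show "mat_mul (2*n+1) (id_off_mid n) x = x"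
    by (intro ext) (unfold mat_mul_id_off_mid_left, auto simp: zero)
  show "mat_mul (2*n+1) x (id_off_mid n) = x"
    by (intro ext) (unfold mat_mul_id_off_mid_right, auto simp: zero)
qed

lemma commute_Fmat_iff_commute_Fmat_inv:
  assumes "x \<in> so_odd n" "\<And>i. x i (n+1) = 0" "\<And>i. x (n+1) i = 0"
  shows "mat_mul (2*n+1) (Fmat n) x = mat_mul (2*n+1) x (Fmat n) \<longleftrightarrow>
    mat_mul (2*n+1) (Fmat_inv n) x = mat_mul (2*n+1) x (Fmat_inv n)"
  using commute_inverse[OF Fmat_Fmat_inv Fmat_inv_Fmat id_off_mid_neutral[OF assms]]
    commute_inverse[OF Fmat_inv_Fmat Fmat_Fmat_inv id_off_mid_neutral[OF assms]]
  by blast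

lemma kirillov_ker_iff_commute_Fmat_inv:
  "x \<in> kirillov_ker (so_odd n) (lie_br (2*n+1)) (F_fun n) \<longleftrightarrow>
   x \<in> so_odd n \<and> (\<forall>i. x i (n+1) = 0 \<and> x (n+1) i = 0) \<and>
   mat_mul (2*n+1) (Fmat_inv n) x = mat_mul (2*n+1) x (Fmat_inv n)"
  using kirillov_ker_iff_commute[of x n] commute_Fmat_mid_zero[of x n]
    commute_Fmat_iff_commute_Fmat_inv[of x n]
  by blast

text \<open>The inverse of the n \<times> n matrix with entries [i + j \<le> n + 1], the upper-left block of Fmat.\<close>
definition antitri_inv :: "nat \<Rightarrow> cmat" where
  "antitri_inv n i j = (if i \<in> {1..n} \<and> j \<in> {1..n} then
     (if j = n+1-i then 1 else 0) - (if 2 \<le> i \<and> j = n+2-i then 1 else 0) else 0)"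

lemma antitri_inv_sym: "antitri_inv n i j = antitri_inv n j i"
  unfolding antitri_inv_def by (rule if_cong) auto

lemma mat_mul_antitri_inv_left:
  "mat_mul n (antitri_inv n) Y i j = (if i \<in> {1..n} \<and> j \<in> {1..n} then
     Y (n+1-i) j - (if 2 \<le> i then Y (n+2-i) j else 0) else 0)"
  by (auto simp: mat_mul_def antitri_inv_def left_diff_distrib sum_subtractf
      if_distrib[where f="\<lambda>x. x * _"] sum.delta' cong: if_cong)

lemma mat_mul_antitri_inv_right:
  "mat_mul n Y (antitri_inv n) i j = (if i \<in> {1..n} \<and> j \<in> {1..n} then
     Y i (n+1-j) - (if 2 \<le> j then Y i (n+2-j) else 0) else 0)"
  by (simp only: mat_mul_symmetric_right[OF antitri_inv_sym] mat_mul_antitri_inv_left conj_commute)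

text \<open>For k < n, cent_basis n k is the basis element of the centralizer of antitri_inv whose first
  column is e_(k+1).\<close>
definition cent_basis :: "nat \<Rightarrow> nat \<Rightarrow> cmat" where
  "cent_basis n k i j = (if 1 \<le> i \<and> i \<le> n \<and> 1 \<le> j \<and> j \<le> n \<and> i \<le> j+k \<and> j \<le> i+k \<and>
      k+2 \<le> i+j \<and> i+j+k \<le> 2*n+1 then (-1)^(i+j+k) else 0)"

lemma cent_basis_sym: "cent_basis n k i j = cent_basis n k j i"
  unfolding cent_basis_def by (auto simp: add.commute)

lemma neg_one_power_shift: "b = a + 2*m \<Longrightarrow> (-1::complex)^b = (-1)^a"
  by (simp add: power_add power_mult)

lemma antitri_inv_mul_cent_basis:
  assumes i: "i \<in> {1..n}" and j: "j \<in> {1..n}"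
  shows "mat_mul n (antitri_inv n) (cent_basis n k) i j =
      (if (n+1 \<le> i+j+k \<and> i+j \<le> n+1+k) \<and> k+1+i \<le> n+j \<and> j+k \<le> n+i then (-1)^(n+1+i+j+k) else 0)
    + (if (n+2 \<le> i+j+k \<and> i+j \<le> n+2+k) \<and> k+i \<le> n+j \<and> j+k+1 \<le> n+i then (-1)^(n+1+i+j+k) else 0)"
proof -
  have "cent_basis n k (n+1-i) j =
      (if (n+1 \<le> i+j+k \<and> i+j \<le> n+1+k) \<and> k+1+i \<le> n+j \<and> j+k \<le> n+i then (-1)^(n+1+i+j+k) else 0)"
  proof -
    have "(1 \<le> n+1-i \<and> n+1-i \<le> n \<and> 1 \<le> j \<and> j \<le> n \<and> n+1-i \<le> j+k \<and> j \<le> n+1-i+k \<and>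
        k+2 \<le> n+1-i+j \<and> n+1-i+j+k \<le> 2*n+1) =
        ((n+1 \<le> i+j+k \<and> i+j \<le> n+1+k) \<and> k+1+i \<le> n+j \<and> j+k \<le> n+i)"
      using i j by auto
    moreover have "(-1::complex)^(n+1-i+j+k) = (-1)^(n+1+i+j+k)"
      by (rule neg_one_power_shift[symmetric, where m=i]) (use i in auto)
    ultimately show ?thesis
      unfolding cent_basis_def by presburger
  qed
  moreover have "(if 2 \<le> i then cent_basis n k (n+2-i) j else 0) =
      - (if (n+2 \<le> i+j+k \<and> i+j \<le> n+2+k) \<and> k+i \<le> n+j \<and> j+k+1 \<le> n+i then (-1)^(n+1+i+j+k) else 0)"
  proof (cases "2 \<le> i")
    case True
    have c: "(1 \<le> n+2-i \<and> n+2-i \<le> n \<and> 1 \<le> j \<and> j \<le> n \<and> n+2-i \<le> j+k \<and> j \<le> n+2-i+k \<and>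
        k+2 \<le> n+2-i+j \<and> n+2-i+j+k \<le> 2*n+1) =
        ((n+2 \<le> i+j+k \<and> i+j \<le> n+2+k) \<and> k+i \<le> n+j \<and> j+k+1 \<le> n+i)"
      using True i j by auto
    have s: "(-1::complex)^(n+2-i+j+k) = - ((-1)^(n+1+i+j+k))"
      using neg_one_power_shift[of "Suc (n+1+i+j+k)" "n+2-i+j+k" i] True i by simp
    show ?thesis
      using True unfolding cent_basis_def c s by simp
  qed (use i in auto)
  ultimately show ?thesis
    using i j by (simp add: mat_mul_antitri_inv_left)
qed

lemma cent_basis_commute_antitri_inv:
  "mat_mul n (antitri_inv n) (cent_basis n k) = mat_mul n (cent_basis n k) (antitri_inv n)"
proof (intro ext)
  fix i j
  show "mat_mul n (antitri_inv n) (cent_basis n k) i j = mat_mul n (cent_basis n k) (antitri_inv n) i j"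
  proof (cases "i \<in> {1..n} \<and> j \<in> {1..n}")
    case True
    text \<open>The two rectangles in the formula for the product can only differ on a diagonal i + j
      = const, where the side conditions coincide.\<close>
    have "(k+1+i \<le> n+j \<and> j+k \<le> n+i) = (k+i \<le> n+j \<and> j+k+1 \<le> n+i)"
      if "(n+1 \<le> i+j+k \<and> i+j \<le> n+1+k) \<noteq> (n+2 \<le> i+j+k \<and> i+j \<le> n+2+k)"
    proof -
      have "i+j = n+2+k \<or> i+j+k = n+1"
        using that by arith
      moreover have "k+i \<noteq> n+j" "j+k \<noteq> n+i" if "i+j = n+2+k"
        using that True by auto
      moreover have "k+i \<noteq> n+j" "j+k \<noteq> n+i" if "i+j+k = n+1"
        using that by presburger+
      ultimately show ?thesis
        by arith
    qed
    then have "mat_mul n (antitri_inv n) (cent_basis n k) i j = mat_mul n (antitri_inv n) (cent_basis n k) j i"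
      using True by (auto simp: antitri_inv_mul_cent_basis ac_simps)
    also have "\<dots> = mat_mul n (cent_basis n k) (antitri_inv n) i j"
      by (subst mat_mul_transpose) (simp add: antitri_inv_sym cent_basis_sym)
    finally show ?thesis .
  qed (simp add: mat_mul_outside)
qed

definition antitri_inv_sq :: "nat \<Rightarrow> cmat" where
  "antitri_inv_sq n = mat_mul n (antitri_inv n) (antitri_inv n)"

lemma antitri_inv_sq_sym: "antitri_inv_sq n i j = antitri_inv_sq n j i"
  unfolding antitri_inv_sq_def by (subst mat_mul_transpose) (simp add: antitri_inv_sym)

lemma mat_mul_antitri_inv_sq_left: "mat_mul n (antitri_inv_sq n) Y i j = (if i\<in>{1..n} \<and> j\<in>{1..n} then
   Y i j - (if i+1 \<le> n then Y (i+1) j else 0) - (if 2 \<le> i then Y (i-1) j - Y i j else 0) else 0)"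
proof (cases "i\<in>{1..n} \<and> j\<in>{1..n}")
  case True
  then have i: "i\<in>{1..n}" and j: "j\<in>{1..n}" by auto
  have "mat_mul n (antitri_inv_sq n) Y i j = mat_mul n (antitri_inv n) (mat_mul n (antitri_inv n) Y) i j"
    unfolding antitri_inv_sq_def mat_mul_assoc ..
  also have "\<dots> = mat_mul n (antitri_inv n) Y (n+1-i) j - (if 2 \<le> i then mat_mul n (antitri_inv n) Y (n+2-i) j else 0)"
    unfolding mat_mul_antitri_inv_left[of n _ i j] using True by (simp only: if_True simp_thms)
  also have "mat_mul n (antitri_inv n) Y (n+1-i) j = Y i j - (if i+1 \<le> n then Y (i+1) j else 0)"
  proof -
    have r: "n+1-i \<in> {1..n}" using i by auto
    have e: "n+1-(n+1-i) = i" "n+2-(n+1-i) = i+1" "(2 \<le> n+1-i) = (i+1 \<le> n)" using i by auto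
    show ?thesis unfolding mat_mul_antitri_inv_left using r j by (simp only: e if_True simp_thms)
  qed
  also have "(if 2 \<le> i then mat_mul n (antitri_inv n) Y (n+2-i) j else 0) = (if 2 \<le> i then Y (i-1) j - Y i j else 0)"
  proof (cases "2 \<le> i")
    case True
    have r: "n+2-i \<in> {1..n}" using i True by auto
    have e: "n+1-(n+2-i) = i-1" "n+2-(n+2-i) = i" "(2 \<le> n+2-i) = True" using i True by auto
    show ?thesis unfolding mat_mul_antitri_inv_left using r j True by (simp only: e if_True simp_thms)
  qed simp
  finally show ?thesis using True by simp
qed (auto simp: mat_mul_def)

lemma mat_mul_antitri_inv_sq_right:
  "mat_mul n Y (antitri_inv_sq n) i j = (if i \<in> {1..n} \<and> j \<in> {1..n} then
     Y i j - (if j+1 \<le> n then Y i (j+1) else 0) - (if 2 \<le> j then Y i (j-1) - Y i j else 0) else 0)"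
  by (simp only: mat_mul_symmetric_right[OF antitri_inv_sq_sym] mat_mul_antitri_inv_sq_left conj_commute)

text \<open>antitri_inv_sq is tridiagonal, so for c commuting with it, column m+1 of c is determined by
  columns m and m-1.\<close>
lemma antitri_inv_sq_commute_first_col_zero:
  assumes C: "mat_mul n (antitri_inv_sq n) c = mat_mul n c (antitri_inv_sq n)"
    and first: "\<And>i. i \<in> {1..n} \<Longrightarrow> c i 1 = 0" and j: "j \<in> {1..n}"
  shows "\<forall>i\<in>{1..n}. c i j = 0"
  using j
proof (induction j rule: less_induct)
  case (less j)
  show ?case
  proof (cases "j = 1")
    case False
    define m where "m = j - 1"
    have m: "m \<in> {1..n}" "j = m+1"
      using less.prems False unfolding m_def by auto
    have col_m: "c p m = 0" if "p \<in> {1..n}" for p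
      using less.IH[of m] m that by auto
    have col_m1: "c p (m-1) = 0" if "p \<in> {1..n}" "2 \<le> m" for p
      using less.IH[of "m-1"] m that by auto
    show ?thesis
    proof
      fix i
      assume i: "i \<in> {1..n}"
      have "c i m = 0"
        using i by (rule col_m)
      moreover have "c (i-1) m = 0" if "2 \<le> i"
        using i that by (intro col_m) auto
      moreover have "c (i+1) m = 0" if "i+1 \<le> n"
        using i that by (intro col_m) auto
      ultimately have "mat_mul n (antitri_inv_sq n) c i m = 0"
        unfolding mat_mul_antitri_inv_sq_left using i m by auto
      moreover have "mat_mul n c (antitri_inv_sq n) i m = - c i (m+1)"
        unfolding mat_mul_antitri_inv_sq_right using i m less.prems col_m[OF i] col_m1[OF i] by auto
      ultimately show "c i j = 0"
        using C m by (metis neg_equal_0_iff_equal)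
    qed
  qed (use first in simp)
qed

lemma cent_basis_commute_antitri_inv_sq:
  "mat_mul n (antitri_inv_sq n) (cent_basis n k) = mat_mul n (cent_basis n k) (antitri_inv_sq n)"
  unfolding antitri_inv_sq_def using commute_square cent_basis_commute_antitri_inv by blast

lemma cent_basis_first_col:
  assumes "k < n"
  shows "cent_basis n k i 1 = (if i = k+1 then 1 else 0)"
proof -
  have "(-1::complex)^(k+1+1+k) = 1"
    using neg_one_power_shift[of "k+1+1+k" 0 "k+1"] by simp
  then show ?thesis
    using assms unfolding cent_basis_def by auto
qed

lemma antitri_inv_sq_commute_eq_sum:
  assumes C: "mat_mul n (antitri_inv_sq n) c = mat_mul n c (antitri_inv_sq n)" and i: "i\<in>{1..n}" and j: "j\<in>{1..n}"
  shows "c i j = (\<Sum>k<n. c (k+1) 1 * cent_basis n k i j)"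
proof -
  define y where "y = c - (\<Sum>k<n. cscale (c (k+1) 1) (cent_basis n k))"
  have Cy: "mat_mul n (antitri_inv_sq n) y = mat_mul n y (antitri_inv_sq n)"
    unfolding y_def mat_mul_diff_left mat_mul_diff_right mat_mul_sum_left[OF finite_lessThan]
      mat_mul_sum_right[OF finite_lessThan] mat_mul_cscale_left mat_mul_cscale_right C cent_basis_commute_antitri_inv_sq ..
  have yv: "y a b = c a b - (\<Sum>k<n. c (k+1) 1 * cent_basis n k a b)" for a b
    unfolding y_def by (simp add: cmat_sum_apply)
  have z: "y a 1 = 0" if a: "a\<in>{1..n}" for a
  proof -
    have "(\<Sum>k<n. c (k+1) 1 * cent_basis n k a 1) = (\<Sum>k<n. if k = a - 1 then c a 1 else 0)"
      using a by (intro sum.cong refl) (auto simp: cent_basis_first_col[simplified])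
    also have "\<dots> = c a 1"
    proof -
      have "a - 1 < n" using a by auto
      then show ?thesis by (simp add: sum.delta)
    qed
    finally show ?thesis unfolding yv by simp
  qed
  have "y i j = 0"
    using antitri_inv_sq_commute_first_col_zero[OF Cy z j] i by blast
  then show ?thesis unfolding yv by simp
qed

lemma antitri_inv_sq_commute_skew_zero:
  assumes C: "mat_mul n (antitri_inv_sq n) c = mat_mul n c (antitri_inv_sq n)"
    and sk: "\<And>i j. i\<in>{1..n} \<Longrightarrow> j\<in>{1..n} \<Longrightarrow> c i j = - c j i"
    and i: "i\<in>{1..n}" and j: "j\<in>{1..n}"
  shows "c i j = 0"
proof -
  have "c i j = c j i" unfolding antitri_inv_sq_commute_eq_sum[OF C i j] antitri_inv_sq_commute_eq_sum[OF C j i] by (simp add: cent_basis_sym)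
  then show ?thesis using sk[OF i j] by simp
qed

text \<open>The embedding a \<mapsto> diag(a, 0, -a') of gl(n) into so(2n+1), where a' is the transpose of a
  along the antidiagonal.\<close>
definition block_embed :: "nat \<Rightarrow> cmat \<Rightarrow> cmat" where
  "block_embed n a i j = (if i \<in> {1..n} \<and> j \<in> {1..n} then a i j
     else if i \<in> {n+2..2*n+1} \<and> j \<in> {n+2..2*n+1} then - a (2*n+2-j) (2*n+2-i) else 0)"

lemma block_embed_upper: "i \<in> {1..n} \<Longrightarrow> j \<in> {1..n} \<Longrightarrow> block_embed n a i j = a i j"
  unfolding block_embed_def by simp

lemma block_embed_so_odd: "block_embed n a \<in> so_odd n"
  unfolding so_odd_def supported_def by (auto simp: block_embed_def)

lemma Fmat_inv_mul_block_embed: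
  "mat_mul (2*n+1) (Fmat_inv n) (block_embed n a) i j =
    (if i \<in> {1..n} \<and> j \<in> {1..n} then mat_mul n (antitri_inv n) a i j
     else if i \<in> {n+2..2*n+1} \<and> j \<in> {n+2..2*n+1} then mat_mul n a (antitri_inv n) (2*n+2-j) (2*n+2-i)
     else 0)"
proof (cases "i \<in> {1..2*n+1} \<and> j \<in> {1..2*n+1}")
  case True
  consider "i \<le> n" "j \<le> n" | "i \<le> n" "n+1 \<le> j" | "i = n+1" | "n+2 \<le> i" "j \<le> n+1" | "n+2 \<le> i" "n+2 \<le> j"
    by linarith
  then show ?thesis
    unfolding mat_mul_Fmat_inv_left using True
    by cases (auto simp: block_embed_def mat_mul_antitri_inv_left
        mat_mul_antitri_inv_right)
qed (auto simp: mat_mul_outside)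

lemma block_embed_mul_Fmat_inv:
  "mat_mul (2*n+1) (block_embed n a) (Fmat_inv n) i j =
    (if i \<in> {1..n} \<and> j \<in> {1..n} then mat_mul n a (antitri_inv n) i j
     else if i \<in> {n+2..2*n+1} \<and> j \<in> {n+2..2*n+1} then mat_mul n (antitri_inv n) a (2*n+2-j) (2*n+2-i)
     else 0)"
proof (cases "i \<in> {1..2*n+1} \<and> j \<in> {1..2*n+1}")
  case True
  consider "j \<le> n" "i \<le> n" | "j \<le> n" "n+1 \<le> i" | "j = n+1" | "n+2 \<le> j" "i \<le> n+1" | "n+2 \<le> j" "n+2 \<le> i"
    by linarith
  then show ?thesis
    unfolding mat_mul_Fmat_inv_right using True
    by cases (auto simp: block_embed_def mat_mul_antitri_inv_left mat_mul_antitri_inv_right)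
qed (auto simp: mat_mul_outside)

lemma block_embed_commute_Fmat_inv:
  assumes "mat_mul n (antitri_inv n) a = mat_mul n a (antitri_inv n)"
  shows "mat_mul (2*n+1) (Fmat_inv n) (block_embed n a) = mat_mul (2*n+1) (block_embed n a) (Fmat_inv n)"
  by (intro ext) (simp only: Fmat_inv_mul_block_embed block_embed_mul_Fmat_inv assms)

lemma block_embed_mid: "block_embed n a i (n+1) = 0" "block_embed n a (n+1) i = 0"
  by (auto simp: block_embed_def)

lemma block_embed_kirillov_ker:
  assumes "mat_mul n (antitri_inv n) a = mat_mul n a (antitri_inv n)"
  shows "block_embed n a \<in> kirillov_ker (so_odd n) (lie_br (2*n+1)) (F_fun n)"
  unfolding kirillov_ker_iff_commute_Fmat_inv
  using block_embed_so_odd block_embed_mid block_embed_commute_Fmat_inv[OF assms] by blast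

lemma commute_Fmat_inv_upper_block:
  assumes "mat_mul (2*n+1) (Fmat_inv n) x = mat_mul (2*n+1) x (Fmat_inv n)"
  shows "mat_mul n (antitri_inv n) x = mat_mul n x (antitri_inv n)"
proof (intro ext)
  fix i j
  show "mat_mul n (antitri_inv n) x i j = mat_mul n x (antitri_inv n) i j"
  proof (cases "i \<in> {1..n} \<and> j \<in> {1..n}")
    case True
    then have "mat_mul n (antitri_inv n) x i j = mat_mul (2*n+1) (Fmat_inv n) x i j"
      and "mat_mul n x (antitri_inv n) i j = mat_mul (2*n+1) x (Fmat_inv n) i j"
      unfolding mat_mul_Fmat_inv_left mat_mul_Fmat_inv_right mat_mul_antitri_inv_left
        mat_mul_antitri_inv_right by auto
    then show ?thesis
      using assms by simp
  qed (simp add: mat_mul_outside)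
qed

lemma commute_Fmat_inv_upper_right_block:
  assumes "mat_mul (2*n+1) (Fmat_inv n) x = mat_mul (2*n+1) x (Fmat_inv n)"
  shows "mat_mul n (antitri_inv n) (\<lambda>i j. x i (2*n+2-j)) = - mat_mul n (\<lambda>i j. x i (2*n+2-j)) (antitri_inv n)"
proof (intro ext)
  fix i j
  show "mat_mul n (antitri_inv n) (\<lambda>i j. x i (2*n+2-j)) i j = (- mat_mul n (\<lambda>i j. x i (2*n+2-j)) (antitri_inv n)) i j"
  proof (cases "i \<in> {1..n} \<and> j \<in> {1..n}")
    case True
    have "3*n+3-(2*n+2-j) = 2*n+2-(n+1-j)" "2 \<le> j \<Longrightarrow> 3*n+2-(2*n+2-j) = 2*n+2-(n+2-j)"
      using True by auto
    with True have "mat_mul n (antitri_inv n) (\<lambda>i j. x i (2*n+2-j)) i j = mat_mul (2*n+1) (Fmat_inv n) x i (2*n+2-j)"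
      and "mat_mul n (\<lambda>i j. x i (2*n+2-j)) (antitri_inv n) i j = - mat_mul (2*n+1) x (Fmat_inv n) i (2*n+2-j)"
      unfolding mat_mul_Fmat_inv_left mat_mul_Fmat_inv_right mat_mul_antitri_inv_left
        mat_mul_antitri_inv_right by auto
    then show ?thesis
      using assms by simp
  qed (simp add: mat_mul_outside)
qed

lemma commute_Fmat_inv_lower_left_block:
  assumes "mat_mul (2*n+1) (Fmat_inv n) x = mat_mul (2*n+1) x (Fmat_inv n)"
  shows "mat_mul n (antitri_inv n) (\<lambda>i j. x (2*n+2-i) j) = - mat_mul n (\<lambda>i j. x (2*n+2-i) j) (antitri_inv n)"
proof (intro ext)
  fix i j
  show "mat_mul n (antitri_inv n) (\<lambda>i j. x (2*n+2-i) j) i j = (- mat_mul n (\<lambda>i j. x (2*n+2-i) j) (antitri_inv n)) i j"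
  proof (cases "i \<in> {1..n} \<and> j \<in> {1..n}")
    case True
    have "3*n+3-(2*n+2-i) = 2*n+2-(n+1-i)" "2 \<le> i \<Longrightarrow> 3*n+2-(2*n+2-i) = 2*n+2-(n+2-i)"
      using True by auto
    with True have "mat_mul n (antitri_inv n) (\<lambda>i j. x (2*n+2-i) j) i j = - mat_mul (2*n+1) (Fmat_inv n) x (2*n+2-i) j"
      and "mat_mul n (\<lambda>i j. x (2*n+2-i) j) (antitri_inv n) i j = mat_mul (2*n+1) x (Fmat_inv n) (2*n+2-i) j"
      unfolding mat_mul_Fmat_inv_left mat_mul_Fmat_inv_right mat_mul_antitri_inv_left
        mat_mul_antitri_inv_right by auto
    then show ?thesis
      using assms by simp
  qed (simp add: mat_mul_outside)
qed

lemma kirillov_ker_off_diagonal_zero: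
  assumes x: "x \<in> kirillov_ker (so_odd n) (lie_br (2*n+1)) (F_fun n)" and i: "i \<in> {1..n}" and j: "j \<in> {1..n}"
  shows "x i (2*n+2-j) = 0" "x (2*n+2-i) j = 0"
proof -
  have so: "x \<in> so_odd n" and C: "mat_mul (2*n+1) (Fmat_inv n) x = mat_mul (2*n+1) x (Fmat_inv n)"
    using x unfolding kirillov_ker_iff_commute_Fmat_inv by auto
  have "x p (2*n+2-q) = - x q (2*n+2-p)" and "x (2*n+2-p) q = - x (2*n+2-q) p"
    if "p \<in> {1..n}" "q \<in> {1..n}" for p q
  proof -
    have "p \<in> {1..2*n+1}" "q \<in> {1..2*n+1}" "2*n+2-p \<in> {1..2*n+1}" "2*n+2-q \<in> {1..2*n+1}"
      "2*n+2-(2*n+2-p) = p" "2*n+2-(2*n+2-q) = q"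
      using that by auto
    then show "x p (2*n+2-q) = - x q (2*n+2-p)" "x (2*n+2-p) q = - x (2*n+2-q) p"
      using so_odd_entry[OF so] by metis+
  qed
  moreover have "mat_mul n (antitri_inv_sq n) (\<lambda>i j. x i (2*n+2-j)) = mat_mul n (\<lambda>i j. x i (2*n+2-j)) (antitri_inv_sq n)"
    and "mat_mul n (antitri_inv_sq n) (\<lambda>i j. x (2*n+2-i) j) = mat_mul n (\<lambda>i j. x (2*n+2-i) j) (antitri_inv_sq n)"
    unfolding antitri_inv_sq_def
    using commute_Fmat_inv_upper_right_block[OF C] commute_Fmat_inv_lower_left_block[OF C]
    by (blast intro: commute_square)+
  ultimately show "x i (2*n+2-j) = 0" "x (2*n+2-i) j = 0"
    using antitri_inv_sq_commute_skew_zero[OF _ _ i j] by blast+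
qed

lemma kirillov_ker_eq_block_embed:
  assumes x: "x \<in> kirillov_ker (so_odd n) (lie_br (2*n+1)) (F_fun n)"
  shows "x = block_embed n x"
proof (intro ext)
  fix i j
  have so: "x \<in> so_odd n" and mid: "\<And>i. x i (n+1) = 0 \<and> x (n+1) i = 0"
    using x unfolding kirillov_ker_iff_commute_Fmat_inv by auto
  consider "i \<in> {1..n} \<and> j \<in> {1..n}" | "i \<in> {n+2..2*n+1} \<and> j \<in> {n+2..2*n+1}"
    | "i \<in> {1..n}" "j \<in> {n+2..2*n+1}" | "i \<in> {n+2..2*n+1}" "j \<in> {1..n}"
    | "i = n+1 \<or> j = n+1" | "\<not> (i \<in> {1..2*n+1} \<and> j \<in> {1..2*n+1})"
    by fastforce
  then show "x i j = block_embed n x i j"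
  proof cases
    case 3
    moreover have "2*n+2-j \<in> {1..n}" "2*n+2-(2*n+2-j) = j"
      using 3 by auto
    ultimately show ?thesis
      using kirillov_ker_off_diagonal_zero(1)[OF x, of i "2*n+2-j"] by (auto simp: block_embed_def)
  next
    case 4
    moreover have "2*n+2-i \<in> {1..n}" "2*n+2-(2*n+2-i) = i"
      using 4 by auto
    ultimately show ?thesis
      using kirillov_ker_off_diagonal_zero(2)[OF x, of "2*n+2-i" j] by (auto simp: block_embed_def)
  qed (use so_odd_entry[OF so, of i j] so_odd_outside[OF so] mid in \<open>auto simp: block_embed_def\<close>)
qed

lemma block_embed_cong:
  assumes "\<And>i j. i \<in> {1..n} \<Longrightarrow> j \<in> {1..n} \<Longrightarrow> a i j = b i j"
  shows "block_embed n a = block_embed n b"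
proof (intro ext)
  fix i j
  have "i \<in> {n+2..2*n+1} \<and> j \<in> {n+2..2*n+1} \<Longrightarrow> 2*n+2-j \<in> {1..n} \<and> 2*n+2-i \<in> {1..n}"
    by auto
  then show "block_embed n a i j = block_embed n b i j"
    using assms by (auto simp: block_embed_def)
qed

lemma block_embed_sum_cscale:
  "block_embed n (\<Sum>k\<in>A. cscale (f k) (g k)) = (\<Sum>k\<in>A. cscale (f k) (block_embed n (g k)))"
  by (auto simp: fun_eq_iff block_embed_def cmat_sum_apply sum_negf)

lemma kirillov_ker_eq_sum:
  assumes x: "x \<in> kirillov_ker (so_odd n) (lie_br (2*n+1)) (F_fun n)"
  shows "x = (\<Sum>k<n. cscale (x (k+1) 1) (block_embed n (cent_basis n k)))"
proof -
  have "mat_mul n (antitri_inv n) x = mat_mul n x (antitri_inv n)"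
    using x unfolding kirillov_ker_iff_commute_Fmat_inv by (blast intro: commute_Fmat_inv_upper_block)
  then have "mat_mul n (antitri_inv_sq n) x = mat_mul n x (antitri_inv_sq n)"
    unfolding antitri_inv_sq_def by (blast intro: commute_square)
  then have "x i j = (\<Sum>k<n. cscale (x (k+1) 1) (cent_basis n k)) i j" if "i \<in> {1..n}" "j \<in> {1..n}" for i j
    using antitri_inv_sq_commute_eq_sum that by (simp add: cmat_sum_apply)
  then have "block_embed n x = block_embed n (\<Sum>k<n. cscale (x (k+1) 1) (cent_basis n k))"
    by (rule block_embed_cong)
  then show ?thesis
    using kirillov_ker_eq_block_embed[OF x] by (simp add: block_embed_sum_cscale)
qed

lemma block_embed_cent_basis_first_col:
  "k < n \<Longrightarrow> l < n \<Longrightarrow> block_embed n (cent_basis n k) (l+1) 1 = (if l = k then 1 else 0)"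
  using cent_basis_first_col[of k n "l+1"] by (simp add: block_embed_upper)

lemma inj_on_block_embed_cent_basis: "inj_on (\<lambda>k. block_embed n (cent_basis n k)) {..<n}"
proof (rule inj_onI)
  fix k l
  assume "k \<in> {..<n}" "l \<in> {..<n}" and "block_embed n (cent_basis n k) = block_embed n (cent_basis n l)"
  then show "k = l"
    using block_embed_cent_basis_first_col[of k n k] block_embed_cent_basis_first_col[of l n k]
    by (auto split: if_splits)
qed

lemma independent_block_embed_cent_basis:
  "cmat_vs.independent ((\<lambda>k. block_embed n (cent_basis n k)) ` {..<n})"
proof (rule cmat_vs.independent_if_scalars_zero)
  let ?Z = "\<lambda>k. block_embed n (cent_basis n k)"
  fix u v
  assume sum: "(\<Sum>v\<in>?Z ` {..<n}. cscale (u v) v) = 0" and "v \<in> ?Z ` {..<n}"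
  then obtain k where k: "k < n" and v: "v = ?Z k"
    by auto
  have "0 = (\<Sum>l<n. cscale (u (?Z l)) (?Z l)) (k+1) 1"
    using sum by (simp add: sum.reindex[OF inj_on_block_embed_cent_basis])
  also have "\<dots> = (\<Sum>l<n. u (?Z l) * ?Z l (k+1) 1)"
    by (simp only: cmat_sum_apply cscale_apply)
  also have "\<dots> = (\<Sum>l<n. if l = k then u (?Z l) else 0)"
  proof (rule sum.cong[OF refl])
    fix l
    assume "l \<in> {..<n}"
    then show "u (?Z l) * ?Z l (k+1) 1 = (if l = k then u (?Z l) else 0)"
      using block_embed_cent_basis_first_col[of l n k] k by simp
  qed
  also have "\<dots> = u v"
    using k v by simp
  finally show "u v = 0" ..
qed simp

theorem theorem4p17:
  fixes n :: nat
  assumes "n \<ge> 1"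
  shows "cmat_vs.dim (kirillov_ker (so_odd n) (lie_br (2*n+1)) (F_fun n)) = n"
proof -
  let ?K = "kirillov_ker (so_odd n) (lie_br (2*n+1)) (F_fun n)"
  let ?S = "(\<lambda>k. block_embed n (cent_basis n k)) ` {..<n}"
  have "?S \<subseteq> ?K"
    using block_embed_kirillov_ker[OF cent_basis_commute_antitri_inv] by blast
  moreover have "?K \<subseteq> cmat_vs.span ?S"
  proof
    fix x
    assume "x \<in> ?K"
    then have "x = (\<Sum>k<n. cscale (x (k+1) 1) (block_embed n (cent_basis n k)))"
      by (rule kirillov_ker_eq_sum)
    also have "\<dots> \<in> cmat_vs.span ?S"
      by (intro cmat_vs.span_sum cmat_vs.span_scale cmat_vs.span_base) auto
    finally show "x \<in> cmat_vs.span ?S" .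
  qed
  ultimately have "cmat_vs.dim ?K = card ?S"
    using cmat_vs.basis_card_eq_dim independent_block_embed_cent_basis by metis
  also have "card ?S = n"
    using card_image[OF inj_on_block_embed_cent_basis] by simp
  finally show ?thesis .
qed

end
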